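(* Let $P$ be an lqCCS process and let $\Sigma,\Sigma'$ be sets of quantum names. If $\Sigma \vdash P$ and $\Sigma' \vdash P$, then $\Sigma = \Sigma'$.
   Context: Fix denumerable sets $\mathcal{Q}$ of qubit names, of variables, and of channels; variables and channels are typed, with value types $\mathcal{Q}$ (qubits), $\mathbb{N}$, $\mathbb{B}$ and channel types $\mathrm{Ch}(\mathcal{Q}),\mathrm{Ch}(\mathbb{N}),\mathrm{Ch}(\mathbb{B})$. lqCCS processes are generated by $P ::= K \mid P \parallel P \mid P\setminus c \mid \mathsf{if}\ e\ \mathsf{then}\ P\ \mathsf{else}\ P$, $K ::= \mathbf{0}_{\tilde e} \mid \tau.P \mid \mathcal{E}(\tilde e).P \mid M(\tilde e \rhd x).P \mid c?x.P \mid c!e \mid K+K$, $e ::= x \mid b \mid n \mid q \mid \neg e \mid e\lor e \mid e\le e$, where $b\in\mathbb{B}$, $n\in\mathbb{N}$, $q\in\mathcal{Q}$, $x$ a variable, $c$ a channel, and $\tilde e$ a (possibly empty) tuple of expressions. $\mathcal{E}$ ranges over trace-preserving superoperators on $n$ qubits (written $\mathcal{E}:\mathrm{Op}(n)$) and $M$ over quantum measurements $\{M_0,\dots,M_{k-1}\}$ on $n$ qubits (written $M:\mathrm{Meas}(n)$). Expressions of types $\mathbb{N},\mathbb{B}$ are typed in the standard way. Typing judgments have the form $\Sigma\vdash P$ where $\Sigma$ is a set of quantum names (qubit names and variables of type $\mathcal{Q}$). For a set $A$, $\tilde A$ denotes the set of tuples in which every element of $A$ occurs exactly once. The typing rules are: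 (Nil) $\Sigma\vdash \mathbf{0}_{\tilde e}$ if $\tilde e\in\tilde\Sigma$; (Tau) $\Sigma\vdash\tau.P$ if $\Sigma\vdash P$; (QMeas) $\Sigma\vdash M(\tilde e\rhd y).P$ if $M:\mathrm{Meas}(n)$, $S\subseteq\Sigma$, $|S|=n$, $\tilde e\in\tilde S$, $y:\mathbb{N}$, $\Sigma\vdash P$; (QOp) $\Sigma\vdash\mathcal{E}(\tilde e).P$ if $\mathcal{E}:\mathrm{Op}(n)$, $S\subseteq\Sigma$, $|S|=n$, $\tilde e\in\tilde S$, $\Sigma\vdash P$; (Restrict) $\Sigma\vdash P\setminus c$ if $\Sigma\vdash P$; (Sum) $\Sigma\vdash P+Q$ if $\Sigma\vdash P$ and $\Sigma\vdash Q$; (CRecv) $\Sigma\vdash c?x.P$ if $c:\mathrm{Ch}(T)$, $x:T$ with $T\in\{\mathbb{B},\mathbb{N}\}$, $\Sigma\vdash P$; (QRecv) $\Sigma\vdash c?x.P$ if $c:\mathrm{Ch}(\mathcal{Q})$, $x:\mathcal{Q}$, $\Sigma\cup\{x\}\vdash P$; (QSend) $\{e\}\vdash c!e$ if $c:\mathrm{Ch}(\mathcal{Q})$, $e:\mathcal{Q}$; (CSend) $\emptyset\vdash c!e$ if $c:\mathrm{Ch}(T)$, $e:T$ with $T\in\{\mathbb{B},\mathbb{N}\}$; (ITE) $\Sigma\vdash\mathsf{if}\ e\ \mathsf{then}\ P_1\ \mathsf{else}\ P_2$ if $e:\mathbb{B}$, $\Sigma\vdash P_1$, $\Sigma\vdash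 P_2$; (Par) $\Sigma_1\cup\Sigma_2\vdash P_1\parallel P_2$ if $\Sigma_1\cap\Sigma_2=\emptyset$, $\Sigma_1\vdash P_1$, $\Sigma_2\vdash P_2$. *)

theory Defs
  imports Main
begin

datatype vtype = TQ | TN | TB

text \<open>Typed variables and channels: each variable / channel carries its
  (fixed) type; a channel \<open>Ch n T\<close> has channel type Ch(T).\<close>
datatype var = Var nat vtype
datatype chan = Ch nat vtype

type_synonym qubit = nat

fun vty :: "var \<Rightarrow> vtype" where "vty (Var _ t) = t"
fun chty :: "chan \<Rightarrow> vtype" where "chty (Ch _ t) = t"

datatype exp =
    EVar var | EBool bool | ENat nat | EQ qubit
  | ENot exp | EOr exp exp | ELe exp exp

text \<open>Superoperators range over an arbitrary type \<open>'op\<close> and measurements over an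
  arbitrary type \<open>'m\<close>; only their number of qubits matters for typing and is
  given by arity functions (parameters of the typing relation).\<close>
datatype ('op, 'm) proc =
    PK "('op, 'm) kproc"
  | Par "('op, 'm) proc" "('op, 'm) proc"
  | Restr "('op, 'm) proc" chan
  | ITE exp "('op, 'm) proc" "('op, 'm) proc"
and ('op, 'm) kproc =
    Nil "exp list"
  | Tau "('op, 'm) proc"
  | QOp 'op "exp list" "('op, 'm) proc"
  | QMeas 'm "exp list" var "('op, 'm) proc"
  | Recv chan var "('op, 'm) proc"
  | Send chan exp
  | Sum "('op, 'm) kproc" "('op, 'm) kproc"

inductive ety :: "exp \<Rightarrow> vtype \<Rightarrow> bool" where
  "ety (EVar x) (vty x)"
| "ety (EBool b) TB"
| "ety (ENat n) TN"
| "ety (EQ q) TQ"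
| "ety e TB \<Longrightarrow> ety (ENot e) TB"
| "ety e1 TB \<Longrightarrow> ety e2 TB \<Longrightarrow> ety (EOr e1 e2) TB"
| "ety e1 TN \<Longrightarrow> ety e2 TN \<Longrightarrow> ety (ELe e1 e2) TB"

datatype qname = QQubit qubit | QVar var

fun qn_of :: "exp \<Rightarrow> qname option" where
  "qn_of (EQ q) = Some (QQubit q)"
| "qn_of (EVar x) = (if vty x = TQ then Some (QVar x) else None)"
| "qn_of _ = None"

text \<open>\<open>tuple_in es S\<close>: the tuple \<open>es\<close> lies in \<open>S\<^sup>~\<close>, i.e. every element of \<open>S\<close>
  occurs in \<open>es\<close> exactly once (and \<open>es\<close> consists only of elements of \<open>S\<close>).\<close>
definition tuple_in :: "exp list \<Rightarrow> qname set \<Rightarrow> bool" where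
  "tuple_in es S \<longleftrightarrow>
     (\<exists>ns. map qn_of es = map Some ns \<and> distinct ns \<and> set ns = S)"

inductive
  ptyped :: "('op \<Rightarrow> nat) \<Rightarrow> ('m \<Rightarrow> nat) \<Rightarrow> qname set \<Rightarrow> ('op, 'm) proc \<Rightarrow> bool"
  and ktyped :: "('op \<Rightarrow> nat) \<Rightarrow> ('m \<Rightarrow> nat) \<Rightarrow> qname set \<Rightarrow> ('op, 'm) kproc \<Rightarrow> bool"
  for opar :: "'op \<Rightarrow> nat" and mar :: "'m \<Rightarrow> nat"
where
  T_K: "ktyped opar mar \<Sigma> K \<Longrightarrow> ptyped opar mar \<Sigma> (PK K)"
| T_Nil: "tuple_in es \<Sigma> \<Longrightarrow> ktyped opar mar \<Sigma> (Nil es)"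
| T_Tau: "ptyped opar mar \<Sigma> P \<Longrightarrow> ktyped opar mar \<Sigma> (Tau P)"
| T_QMeas: "S \<subseteq> \<Sigma> \<Longrightarrow> card S = mar M \<Longrightarrow> finite S \<Longrightarrow> tuple_in es S \<Longrightarrow> vty y = TN
    \<Longrightarrow> ptyped opar mar \<Sigma> P \<Longrightarrow> ktyped opar mar \<Sigma> (QMeas M es y P)"
| T_QOp: "S \<subseteq> \<Sigma> \<Longrightarrow> card S = opar E \<Longrightarrow> finite S \<Longrightarrow> tuple_in es S
    \<Longrightarrow> ptyped opar mar \<Sigma> P \<Longrightarrow> ktyped opar mar \<Sigma> (QOp E es P)"
| T_Restrict: "ptyped opar mar \<Sigma> P \<Longrightarrow> ptyped opar mar \<Sigma> (Restr P c)"
| T_Sum: "ktyped opar mar \<Sigma> K1 \<Longrightarrow> ktyped opar mar \<Sigma> K2 \<Longrightarrow> ktyped opar mar \<Sigma> (Sum K1 K2)"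
| T_CRecv: "chty c = T \<Longrightarrow> vty x = T \<Longrightarrow> T \<in> {TB, TN} \<Longrightarrow> ptyped opar mar \<Sigma> P
    \<Longrightarrow> ktyped opar mar \<Sigma> (Recv c x P)"
| T_QRecv: "chty c = TQ \<Longrightarrow> vty x = TQ \<Longrightarrow> QVar x \<notin> \<Sigma>
    \<Longrightarrow> ptyped opar mar (\<Sigma> \<union> {QVar x}) P \<Longrightarrow> ktyped opar mar \<Sigma> (Recv c x P)"
| T_QSend: "chty c = TQ \<Longrightarrow> ety e TQ \<Longrightarrow> qn_of e = Some n
    \<Longrightarrow> ktyped opar mar {n} (Send c e)"
| T_CSend: "chty c = T \<Longrightarrow> ety e T \<Longrightarrow> T \<in> {TB, TN} \<Longrightarrow> ktyped opar mar {} (Send c e)"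
| T_ITE: "ety e TB \<Longrightarrow> ptyped opar mar \<Sigma> P1 \<Longrightarrow> ptyped opar mar \<Sigma> P2
    \<Longrightarrow> ptyped opar mar \<Sigma> (ITE e P1 P2)"
| T_Par: "\<Sigma>1 \<inter> \<Sigma>2 = {} \<Longrightarrow> ptyped opar mar \<Sigma>1 P1 \<Longrightarrow> ptyped opar mar \<Sigma>2 P2
    \<Longrightarrow> ptyped opar mar (\<Sigma>1 \<union> \<Sigma>2) (Par P1 P2)"

end

theory Submission
  imports Defs
begin

(* Every typing rule is determined by the head constructor of the process, except that
   receiving and sending each have a classical and a quantum rule; which one applies is
   fixed by the type of the channel.  So an induction on one derivation, inverting the
   other, shows that both assign the same set of names: a tuple of distinct names
   determines the set it enumerates, a quantum receive adds a name that was fresh on both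
   sides, and a parallel composition unions the uniquely determined sets of its parts. *)

lemma tuple_in_unique: "tuple_in es S \<Longrightarrow> tuple_in es S' \<Longrightarrow> S = S'"
  unfolding tuple_in_def by (metis list.inj_map_strong option.inject)

inductive_cases ptyped_PK_E: "ptyped opar mar \<Sigma> (PK K)"
inductive_cases ptyped_Par_E: "ptyped opar mar \<Sigma> (Par P1 P2)"
inductive_cases ptyped_Restr_E: "ptyped opar mar \<Sigma> (Restr P c)"
inductive_cases ptyped_ITE_E: "ptyped opar mar \<Sigma> (ITE e P1 P2)"
inductive_cases ktyped_Nil_E: "ktyped opar mar \<Sigma> (Nil es)"
inductive_cases ktyped_Tau_E: "ktyped opar mar \<Sigma> (Tau P)"
inductive_cases ktyped_QOp_E: "ktyped opar mar \<Sigma> (QOp E es P)"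
inductive_cases ktyped_QMeas_E: "ktyped opar mar \<Sigma> (QMeas M es y P)"
inductive_cases ktyped_Recv_E: "ktyped opar mar \<Sigma> (Recv c x P)"
inductive_cases ktyped_Send_E: "ktyped opar mar \<Sigma> (Send c e)"
inductive_cases ktyped_Sum_E: "ktyped opar mar \<Sigma> (Sum K1 K2)"

lemma ptyped_ktyped_unique:
  "ptyped opar mar \<Sigma> P \<Longrightarrow> (\<And>\<Sigma>'. ptyped opar mar \<Sigma>' P \<Longrightarrow> \<Sigma> = \<Sigma>')"
  "ktyped opar mar \<Sigma> K \<Longrightarrow> (\<And>\<Sigma>'. ktyped opar mar \<Sigma>' K \<Longrightarrow> \<Sigma> = \<Sigma>')"
proof (induction rule: ptyped_ktyped.inducts)
  case T_K
  then show ?case by (metis ptyped_PK_E)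
next
  case T_Nil
  then show ?case by (metis ktyped_Nil_E tuple_in_unique)
next
  case T_Tau
  then show ?case by (metis ktyped_Tau_E)
next
  case T_QMeas
  then show ?case by (metis ktyped_QMeas_E)
next
  case T_QOp
  then show ?case by (metis ktyped_QOp_E)
next
  case T_Restrict
  then show ?case by (metis ptyped_Restr_E)
next
  case T_Sum
  then show ?case by (metis ktyped_Sum_E)
next
  case (T_CRecv c T x \<Sigma> P)
  from T_CRecv.prems show ?case
  proof (rule ktyped_Recv_E)
    assume "ptyped opar mar \<Sigma>' P"
    then show ?thesis by (rule T_CRecv.IH)
  next
    assume "chty c = TQ"
    with T_CRecv.hyps show ?thesis by simp
  qed
next
  case (T_QRecv c x \<Sigma> P)
  from T_QRecv.prems show ?case
  proof (rule ktyped_Recv_E)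
    assume "chty c = TB \<or> chty c = TN"
    with T_QRecv.hyps show ?thesis by simp
  next
    assume fresh: "QVar x \<notin> \<Sigma>'" and body: "ptyped opar mar (insert (QVar x) \<Sigma>') P"
    have "insert (QVar x) \<Sigma> = insert (QVar x) \<Sigma>'"
      using T_QRecv.IH body by simp
    with fresh T_QRecv.hyps(3) show ?thesis by (simp add: insert_ident)
  qed
next
  case T_QSend
  from T_QSend.prems show ?case
    by (rule ktyped_Send_E) (use T_QSend.hyps in simp_all)
next
  case T_CSend
  from T_CSend.prems show ?case
    by (rule ktyped_Send_E) (use T_CSend.hyps in simp_all)
next
  case T_ITE
  then show ?case by (metis ptyped_ITE_E)
next
  case T_Par
  from T_Par.prems show ?case
    by (rule ptyped_Par_E) (use T_Par.IH in blast)
qed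

theorem proposition3p1:
  fixes opar :: "'op \<Rightarrow> nat" and mar :: "'m \<Rightarrow> nat"
    and P :: "('op, 'm) proc" and \<Sigma> \<Sigma>' :: "qname set"
  assumes "ptyped opar mar \<Sigma> P" and "ptyped opar mar \<Sigma>' P"
  shows "\<Sigma> = \<Sigma>'"
  using assms by (rule ptyped_ktyped_unique(1))

end
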